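(* Let $K=2$ and suppose that for every horizon $T$ (a multiple of $100$) a valid pair $(\eta,\gamma)=(\eta_T,\gamma_T)$ in the non-trivial regime is chosen. Then there exists $T_0$ such that for all $T\ge T_0$, WSU-UX run on the two-phase loss sequence satisfies $$\Pr\bigl(\pi_{T_1+T_2+1,1}\ge\tfrac14\bigr)\ge 1-\frac{2}{T^2},\qquad T_2=\tfrac{2}{10}T.$$
   Context: WSU-UX. Fix integers $K\ge 2$ and $T\ge 1$ and hyperparameters $\eta,\gamma$. The pair $(\eta,\gamma)$ is called valid if $\eta,\gamma\in(0,1/2)$ and $\eta K/\gamma\le 1/2$. Given a fixed loss sequence $\ell_t\in[0,1]^K$, WSU-UX sets $\pi_{1,i}=1/K$ and in each round $t$: forms $\tilde\pi_{t,i}=(1-\gamma)\pi_{t,i}+\gamma/K$; draws $I_t$ with $\Pr(I_t=i\mid\mathcal F_{t-1})=\tilde\pi_{t,i}$; sets $\hat\ell_{t,i}=\ell_{t,i}\mathbf 1[I_t=i]/\tilde\pi_{t,i}$; and updates $\pi_{t+1,i}=\pi_{t,i}\bigl(1-\eta(\hat\ell_{t,i}-\sum_{j}\pi_{t,j}\hat\ell_{t,j})\bigr)$; $\mathcal F_t$ is the history generated by $I_1,\dots,I_t$. Non-trivial regime: $\eta\ge T^{-2/3}$ and $\gamma\le T^{-1/3}$. Two-phase loss sequence ($K=2$, $T$ a multiple of $100$, $T_1=T/100$): $\ell_{t,1}=1,\ell_{t,2}=0$ for $1\le t\le T_1$ and $\ell_{t,1}=0,\ell_{t,2}=1$ for $T_1<t\le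 T$. *)

theory Defs
  imports Complex_Main
begin

text \<open>A history of the first t draws I_1,...,I_t is
  stored as a list in REVERSE chronological order: [I_t, ..., I_1].
  wsu_pi K eta gamma loss h is the weight vector pi_{t+1} after history h
  (t = length h); loss t i is the loss of arm i in round t (t >= 1).\<close>

fun wsu_pi :: "nat \<Rightarrow> real \<Rightarrow> real \<Rightarrow> (nat \<Rightarrow> nat \<Rightarrow> real) \<Rightarrow> nat list \<Rightarrow> (nat \<Rightarrow> real)" where
  "wsu_pi K eta gamma loss [] = (\<lambda>i. 1 / real K)"
| "wsu_pi K eta gamma loss (a # h) =
     (let p = wsu_pi K eta gamma loss h;
          t = Suc (length h);
          pt = (\<lambda>i. (1 - gamma) * p i + gamma / real K);
          lhat = (\<lambda>i. if i = a then loss t i / pt i else 0)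
      in (\<lambda>i. p i * (1 - eta * (lhat i - (\<Sum>j\<in>{1..K}. p j * lhat j)))))"

definition wsu_mix :: "nat \<Rightarrow> real \<Rightarrow> (nat \<Rightarrow> real) \<Rightarrow> nat \<Rightarrow> real" where
  "wsu_mix K gamma p i = (1 - gamma) * p i + gamma / real K"

fun hist_prob :: "nat \<Rightarrow> real \<Rightarrow> real \<Rightarrow> (nat \<Rightarrow> nat \<Rightarrow> real) \<Rightarrow> nat list \<Rightarrow> real" where
  "hist_prob K eta gamma loss [] = 1"
| "hist_prob K eta gamma loss (a # h) =
     hist_prob K eta gamma loss h * wsu_mix K gamma (wsu_pi K eta gamma loss h) a"

definition histories :: "nat \<Rightarrow> nat \<Rightarrow> nat list set" where
  "histories K t = {h. length h = t \<and> set h \<subseteq> {1..K}}"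

definition wsu_prob :: "nat \<Rightarrow> real \<Rightarrow> real \<Rightarrow> (nat \<Rightarrow> nat \<Rightarrow> real) \<Rightarrow> nat \<Rightarrow> ((nat \<Rightarrow> real) \<Rightarrow> bool) \<Rightarrow> real" where
  "wsu_prob K eta gamma loss t P =
     (\<Sum>h\<in>histories K t. if P (wsu_pi K eta gamma loss h) then hist_prob K eta gamma loss h else 0)"

definition valid_pair :: "nat \<Rightarrow> real \<Rightarrow> real \<Rightarrow> bool" where
  "valid_pair K eta gamma \<longleftrightarrow> 0 < eta \<and> eta < 1/2 \<and> 0 < gamma \<and> gamma < 1/2 \<and> eta * real K / gamma \<le> 1/2"

definition nontrivial_regime :: "nat \<Rightarrow> real \<Rightarrow> real \<Rightarrow> bool" where
  "nontrivial_regime T eta gamma \<longleftrightarrow> eta \<ge> real T powr (-2/3) \<and> gamma \<le> real T powr (-1/3)"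

definition two_phase_loss :: "nat \<Rightarrow> nat \<Rightarrow> nat \<Rightarrow> real" where
  "two_phase_loss T t i =
     (if t \<le> T div 100 then (if i = 1 then 1 else 0) else (if i = 2 then 1 else 0))"

end

theory Submission
  imports Defs "HOL-Real_Asymp.Real_Asymp"
begin

text \<open>Follow the odds \<open>\<Phi> = \<pi>\<^sub>2 / \<pi>\<^sub>1\<close>. While arm 1 suffers the loss, one round multiplies
  \<open>E \<Phi>\<close> by at most \<open>1 + 2\<eta>\<close>; while arm 2 suffers it, by at most \<open>1 - \<eta>/2\<close>. Both
  one-step bounds rest on the exploration floor \<open>\<gamma>/2 \<ge> 2\<eta>\<close>, which keeps the importance
  weights \<open>1/\<tilde>\<pi>\<close> small. After \<open>T\<^sub>1 + 20 T\<^sub>1\<close> rounds therefore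
  \<open>E \<Phi> \<le> exp (2\<eta>T\<^sub>1 - 10\<eta>T\<^sub>1) = exp (-8\<eta>T/100)\<close>. Since \<open>\<pi>\<^sub>1 < 1/4\<close> forces \<open>\<Phi> > 3\<close>,
  Markov's inequality bounds the failure probability by \<open>exp (-8\<eta>T/100) / 3\<close>, and
  \<open>\<eta>T \<ge> T\<^sup>1\<^sup>/\<^sup>3\<close> makes this at most \<open>2/T\<^sup>2\<close> for large \<open>T\<close>.\<close>

lemma histories_0: "histories K 0 = {[]}"
  unfolding histories_def by auto

lemma histories_subset: "h \<in> histories K t \<Longrightarrow> set h \<subseteq> {1..K}"
  unfolding histories_def by auto

lemma histories_Suc: "histories K (Suc t) = (\<lambda>(a, h). a # h) ` ({1..K} \<times> histories K t)"
proof (rule set_eqI)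
  fix xs
  show "xs \<in> histories K (Suc t) \<longleftrightarrow> xs \<in> (\<lambda>(a, h). a # h) ` ({1..K} \<times> histories K t)"
    unfolding histories_def by (cases xs) force+
qed

lemma sum_histories_Suc:
  "(\<Sum>h\<in>histories K (Suc t). f h) = (\<Sum>h\<in>histories K t. \<Sum>a\<in>{1..K}. f (a # h))"
proof -
  have "inj_on (\<lambda>(a, h). a # h) ({1..K} \<times> histories K t)"
    by (auto simp: inj_on_def)
  then have "(\<Sum>h\<in>histories K (Suc t). f h) = (\<Sum>(a, h)\<in>{1..K} \<times> histories K t. f (a # h))"
    unfolding histories_Suc by (simp add: sum.reindex case_prod_unfold)
  also have "\<dots> = (\<Sum>h\<in>histories K t. \<Sum>a\<in>{1..K}. f (a # h))"
    by (simp add: sum.cartesian_product[symmetric]) (rule sum.swap)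
  finally show ?thesis .
qed

lemma sum_histories_Suc_hist_prob:
  "(\<Sum>h\<in>histories K (Suc t). hist_prob K e g loss h * f h) =
   (\<Sum>h\<in>histories K t. hist_prob K e g loss h *
      (\<Sum>a\<in>{1..K}. wsu_mix K g (wsu_pi K e g loss h) a * f (a # h)))"
  by (simp add: sum_histories_Suc sum_distrib_left mult.assoc)

lemma wsu_pi_Cons:
  assumes "a \<in> {1..K}"
  shows "wsu_pi K e g loss (a # h) i = wsu_pi K e g loss h i *
    (1 - e * ((if i = a then 1 else 0) - wsu_pi K e g loss h a) *
       (loss (Suc (length h)) a / wsu_mix K g (wsu_pi K e g loss h) a))"
  using assms by (simp add: Let_def wsu_mix_def if_distrib sum.delta cong: if_cong)
    (simp add: diff_divide_distrib[symmetric] algebra_simps)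

declare wsu_pi.simps(2) [simp del]

text \<open>One round with two arms, where the arm of weight \<open>x\<close> has loss 1 and the other loss 0:
  with probability \<open>q\<close> the lossy arm is drawn and the weights become
  \<open>x (1 - e (1 - x) / q)\<close> and \<open>(1 - x) (1 + e x / q)\<close>; otherwise nothing changes.\<close>

lemma odds_growth_after_loss:
  fixes e g x q :: real
  assumes e: "0 < e" "4 * e \<le> g" and g: "g \<le> 1" and x: "0 < x" "x < 1"
    and q_def: "q = (1 - g) * x + g / 2"
  shows "q * ((1 - x) * (1 + e * x / q) / (x * (1 - e * (1 - x) / q))) + (1 - q) * ((1 - x) / x)
    \<le> (1 + 2 * e) * ((1 - x) / x)"
proof -
  define D where "D = q - e * (1 - x)"
  have "0 \<le> (1 - g) * x" and ex: "e * (1 - x) \<le> e"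
    using e g x by (simp_all add: mult_left_le)
  then have q: "g / 2 \<le> q" "0 < q"
    using e unfolding q_def by linarith+
  have D: "q \<le> 2 * D" "0 < D"
    using e ex q D_def by linarith+
  have "(1 - x) * (1 + e * x / q) = (1 - x) * (q + e * x) / q" "x * (1 - e * (1 - x) / q) = x * D / q"
    using q unfolding D_def by (simp_all add: field_simps)
  then have ratio: "(1 - x) * (1 + e * x / q) / (x * (1 - e * (1 - x) / q)) = ((1 - x) / x) * ((q + e * x) / D)"
    using q D x by simp
  have "q * ((q + e * x) / D) + (1 - q) = 1 + e * q / D"
    using D unfolding D_def by (simp add: field_simps)
  then have "q * ((1 - x) * (1 + e * x / q) / (x * (1 - e * (1 - x) / q))) + (1 - q) * ((1 - x) / x)
      = ((1 - x) / x) * (1 + e * q / D)"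
    unfolding ratio by (metis (no_types, lifting) distrib_left mult.assoc mult.commute)
  also have "\<dots> \<le> ((1 - x) / x) * (1 + 2 * e)"
    using D e x by (intro mult_left_mono) (simp_all add: field_simps)
  finally show ?thesis by (simp add: mult.commute)
qed

lemma odds_decay_after_loss:
  fixes e g x q :: real
  assumes e: "0 < e" "4 * e \<le> g" and g: "g \<le> 1" and x: "0 < x" "x < 1"
    and q_def: "q = (1 - g) * x + g / 2"
  shows "q * (x * (1 - e * (1 - x) / q) / ((1 - x) * (1 + e * x / q))) + (1 - q) * (x / (1 - x))
    \<le> (1 - e / 2) * (x / (1 - x))"
proof -
  define D where "D = q + e * x"
  have "0 \<le> (1 - g) * x" and ex: "e * x \<le> e" "0 \<le> e * x"
    using e g x by (simp_all add: mult_left_le)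
  then have q: "g / 2 \<le> q" "0 < q"
    using e unfolding q_def by linarith+
  have D: "D \<le> 2 * q" "0 < D"
    using e ex q D_def by linarith+
  have "x * (1 - e * (1 - x) / q) = x * (D - e) / q" "(1 - x) * (1 + e * x / q) = (1 - x) * D / q"
    using q unfolding D_def by (simp_all add: field_simps)
  then have ratio: "x * (1 - e * (1 - x) / q) / ((1 - x) * (1 + e * x / q)) = (x / (1 - x)) * ((D - e) / D)"
    using q D x by simp
  have "q * ((D - e) / D) + (1 - q) = 1 - e * q / D"
    using D unfolding D_def by (simp add: field_simps)
  then have "q * (x * (1 - e * (1 - x) / q) / ((1 - x) * (1 + e * x / q))) + (1 - q) * (x / (1 - x))
      = (x / (1 - x)) * (1 - e * q / D)"
    unfolding ratio by (metis (no_types, lifting) distrib_left mult.assoc mult.commute)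
  also have "\<dots> \<le> (x / (1 - x)) * (1 - e / 2)"
    using D e x by (intro mult_left_mono) (simp_all add: field_simps)
  finally show ?thesis by (simp add: mult.commute)
qed

lemma sum_mult_delta_minus:
  fixes p :: "'a \<Rightarrow> real"
  assumes "finite A" "a \<in> A" "(\<Sum>i\<in>A. p i) = 1"
  shows "(\<Sum>i\<in>A. p i * ((if i = a then 1 else 0) - p a)) = 0"
proof -
  have "p i * ((if i = a then 1 else 0) - p a) = (if i = a then p i else 0) - p i * p a" for i
    by (simp add: right_diff_distrib)
  then show ?thesis
    using assms by (simp add: sum_subtractf sum_distrib_right[symmetric])
qed

lemma sum_two_arms: "(\<Sum>i\<in>{1..2::nat}. f i) = f 1 + f 2"
  by (simp add: numeral_2_eq_2)

locale wsu_ux =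
  fixes K :: nat and e g :: real and loss :: "nat \<Rightarrow> nat \<Rightarrow> real"
  assumes K_pos: "0 < K"
    and valid: "valid_pair K e g"
    and loss_range: "\<And>t i. i \<in> {1..K} \<Longrightarrow> 0 \<le> loss t i \<and> loss t i \<le> 1"
begin

abbreviation weights :: "nat list \<Rightarrow> nat \<Rightarrow> real" where
  "weights \<equiv> wsu_pi K e g loss"

abbreviation hprob :: "nat list \<Rightarrow> real" where
  "hprob \<equiv> hist_prob K e g loss"

lemma e_pos: "0 < e" and g_pos: "0 < g" and g_less_1: "g < 1"
  and e_less_mix_floor: "e < g / K" and exploration_dominates: "2 * K * e \<le> g"
proof -
  have "e * K / g \<le> 1/2" "0 < e" "0 < g" "g < 1/2"
    using valid unfolding valid_pair_def by auto
  moreover from this have "e * K \<le> g / 2"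
    by (simp add: field_simps)
  ultimately show "0 < e" "0 < g" "g < 1" "e < g / K" "2 * K * e \<le> g"
    using K_pos by (auto simp: field_simps)
qed

lemma wsu_mix_ge:
  assumes "0 \<le> p i"
  shows "g / K \<le> wsu_mix K g p i"
  using assms g_less_1 unfolding wsu_mix_def by simp

lemma wsu_mix_pos: "0 \<le> p i \<Longrightarrow> 0 < wsu_mix K g p i"
  using wsu_mix_ge g_pos K_pos by (fastforce intro: less_le_trans[rotated])

lemma sum_wsu_mix:
  assumes "(\<Sum>i\<in>{1..K}. p i) = 1"
  shows "(\<Sum>i\<in>{1..K}. wsu_mix K g p i) = 1"
  using assms K_pos by (simp add: wsu_mix_def sum.distrib sum_distrib_left[symmetric])

lemma weights_simplex:
  assumes "set h \<subseteq> {1..K}"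
  shows "(\<forall>i\<in>{1..K}. 0 < weights h i) \<and> (\<Sum>i\<in>{1..K}. weights h i) = 1"
  using assms
proof (induction h)
  case Nil
  then show ?case using K_pos by simp
next
  case (Cons a h)
  define p where "p = weights h"
  define s where "s = loss (Suc (length h)) a / wsu_mix K g p a"
  have a: "a \<in> {1..K}" and p_pos: "\<forall>i\<in>{1..K}. 0 < p i" and p_sum: "(\<Sum>i\<in>{1..K}. p i) = 1"
    using Cons unfolding p_def by auto
  have new: "weights (a # h) i = p i * (1 - e * ((if i = a then 1 else 0) - p a) * s)" for i
    using wsu_pi_Cons[OF a] unfolding p_def s_def .
  have q_pos: "0 < wsu_mix K g p a"
    using wsu_mix_pos[of p a] p_pos a by (simp add: less_imp_le)
  \<comment> \<open>the played arm keeps positive weight because \<open>e < g/K \<le> wsu_mix\<close> bounds \<open>e s\<close> by 1\<close>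
  have s_nonneg: "0 \<le> s" and e_s: "e * s < 1"
  proof -
    have "e * s \<le> e / wsu_mix K g p a"
      using loss_range[OF a] q_pos e_pos unfolding s_def by (simp add: divide_le_cancel mult_le_cancel_left1 field_simps)
    also have "\<dots> < 1"
      using e_less_mix_floor wsu_mix_ge[of p a] p_pos a q_pos by (simp add: less_imp_le)
    finally show "e * s < 1" .
    show "0 \<le> s" using loss_range[OF a] q_pos unfolding s_def by simp
  qed
  have pa: "0 < p a" "p a \<le> 1"
    using p_pos a p_sum member_le_sum[of a "{1..K}" p] by (auto simp: less_imp_le)
  have "0 < weights (a # h) i" if "i \<in> {1..K}" for i
  proof (cases "i = a")
    case True
    have "e * (1 - p a) * s \<le> e * s"
      using mult_left_le[of "1 - p a" "e * s"] pa e_pos s_nonneg by (simp add: mult_ac)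
    then show ?thesis using True pa e_s unfolding new by simp
  next
    case False
    have "0 \<le> e * p a * s" using pa e_pos s_nonneg by simp
    then show ?thesis using False that p_pos unfolding new by (simp add: add_pos_nonneg)
  qed
  moreover have "(\<Sum>i\<in>{1..K}. weights (a # h) i) = 1"
    using sum_mult_delta_minus[OF _ a p_sum] p_sum unfolding new
    by (simp add: right_diff_distrib sum_subtractf sum_distrib_left[symmetric]
        sum_distrib_right[symmetric] mult_ac)
  ultimately show ?case by blast
qed

lemma hprob_nonneg: "set h \<subseteq> {1..K} \<Longrightarrow> 0 \<le> hprob h"
proof (induction h)
  case (Cons a h)
  then have "0 < wsu_mix K g (weights h) a"
    using weights_simplex[of h] by (intro wsu_mix_pos) (simp add: less_imp_le)
  with Cons show ?case by simp
qed simp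

lemma sum_hprob: "(\<Sum>h\<in>histories K t. hprob h) = 1"
proof (induction t)
  case 0
  then show ?case by (simp add: histories_0)
next
  case (Suc t)
  have "(\<Sum>h\<in>histories K (Suc t). hprob h) =
      (\<Sum>h\<in>histories K t. hprob h * (\<Sum>a\<in>{1..K}. wsu_mix K g (weights h) a))"
    using sum_histories_Suc_hist_prob[where f = "\<lambda>_. 1"] by simp
  also have "\<dots> = (\<Sum>h\<in>histories K t. hprob h)"
    using sum_wsu_mix weights_simplex histories_subset by (intro sum.cong) auto
  finally show ?case using Suc by simp
qed

lemma wsu_prob_ge_markov:
  assumes V_nonneg: "\<And>h. h \<in> histories K t \<Longrightarrow> 0 \<le> V h"
    and V_large: "\<And>h. h \<in> histories K t \<Longrightarrow> \<not> Q (weights h) \<Longrightarrow> c \<le> V h"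
    and "0 < c"
  shows "1 - (\<Sum>h\<in>histories K t. hprob h * V h) / c \<le> wsu_prob K e g loss t Q"
proof -
  have "1 - wsu_prob K e g loss t Q = (\<Sum>h\<in>histories K t. if Q (weights h) then 0 else hprob h)"
    unfolding wsu_prob_def sum_hprob[of t, symmetric] sum_subtractf[symmetric]
    by (intro sum.cong) auto
  also have "\<dots> \<le> (\<Sum>h\<in>histories K t. hprob h * V h / c)"
  proof (intro sum_mono)
    fix h assume h: "h \<in> histories K t"
    have "0 \<le> hprob h" using hprob_nonneg[OF histories_subset[OF h]] .
    moreover have "\<not> Q (weights h) \<Longrightarrow> hprob h * c \<le> hprob h * V h"
      using V_large[OF h] \<open>0 \<le> hprob h\<close> by (rule mult_left_mono)
    ultimately show "(if Q (weights h) then 0 else hprob h) \<le> hprob h * V h / c"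
      using V_nonneg[OF h] \<open>0 < c\<close> by (auto simp: field_simps)
  qed
  finally show ?thesis by (simp add: sum_divide_distrib)
qed

end

locale two_arm_wsu = wsu_ux 2 e g loss
  for e g :: real and loss :: "nat \<Rightarrow> nat \<Rightarrow> real"
begin

lemma expected_odds_step:
  assumes h: "set h \<subseteq> {1..2}" and ab: "{a, b} = {1..2::nat}"
    and loss_a: "loss (Suc (length h)) a = 1" and loss_b: "loss (Suc (length h)) b = 0"
  shows expected_odds_growth: "(\<Sum>c\<in>{1..2}. wsu_mix 2 g (weights h) c * (weights (c # h) b / weights (c # h) a))
      \<le> (1 + 2 * e) * (weights h b / weights h a)"
    and expected_odds_decay: "(\<Sum>c\<in>{1..2}. wsu_mix 2 g (weights h) c * (weights (c # h) a / weights (c # h) b))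
      \<le> (1 - e / 2) * (weights h a / weights h b)"
proof -
  define x where "x = weights h a"
  define q where "q = wsu_mix 2 g (weights h) a"
  have "{1..2::nat} = {1, 2}"
    by auto
  then have a: "a \<in> {1..2}" and b: "b \<in> {1..2}" and "a \<noteq> b"
    using ab by (auto simp: doubleton_eq_iff)
  then have sum_ab: "(\<Sum>c\<in>{1..2}. f c) = f a + f b" for f :: "nat \<Rightarrow> real"
    unfolding ab[symmetric] by simp
  have "0 < weights h a" "0 < weights h b" "weights h a + weights h b = 1"
    using weights_simplex[OF h] a b sum_ab[of "weights h"] by auto
  then have x: "0 < x" "x < 1" and pb: "weights h b = 1 - x"
    unfolding x_def by linarith+
  have q: "q = (1 - g) * x + g / 2" and mix_b: "wsu_mix 2 g (weights h) b = 1 - q"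
    using sum_wsu_mix[of "weights h"] weights_simplex[OF h] sum_ab[of "wsu_mix 2 g (weights h)"]
    unfolding q_def x_def wsu_mix_def by auto
  have after_a: "weights (a # h) a = x * (1 - e * (1 - x) / q)"
    "weights (a # h) b = (1 - x) * (1 + e * x / q)"
    using wsu_pi_Cons[OF a, of e g loss h a] wsu_pi_Cons[OF a, of e g loss h b] loss_a \<open>a \<noteq> b\<close>
    unfolding pb x_def[symmetric] q_def[symmetric] by simp_all
  have after_b: "weights (b # h) = weights h"
    using wsu_pi_Cons[OF b, of e g loss h] loss_b by auto
  have "4 * e \<le> g" "g \<le> 1"
    using exploration_dominates g_less_1 by simp_all
  show "(\<Sum>c\<in>{1..2}. wsu_mix 2 g (weights h) c * (weights (c # h) b / weights (c # h) a))
      \<le> (1 + 2 * e) * (weights h b / weights h a)"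
    using odds_growth_after_loss[OF e_pos \<open>4 * e \<le> g\<close> \<open>g \<le> 1\<close> x q]
    unfolding sum_ab after_a after_b mix_b pb q_def[symmetric] x_def[symmetric] .
  show "(\<Sum>c\<in>{1..2}. wsu_mix 2 g (weights h) c * (weights (c # h) a / weights (c # h) b))
      \<le> (1 - e / 2) * (weights h a / weights h b)"
    using odds_decay_after_loss[OF e_pos \<open>4 * e \<le> g\<close> \<open>g \<le> 1\<close> x q]
    unfolding sum_ab after_a after_b mix_b pb q_def[symmetric] x_def[symmetric] .
qed

end

definition odds :: "(nat \<Rightarrow> real) \<Rightarrow> real" where
  "odds p = p 2 / p 1"

locale two_phase_wsu = two_arm_wsu e g "two_phase_loss T"
  for e g :: real and T :: nat
begin

lemma odds_pos: "set h \<subseteq> {1..2} \<Longrightarrow> 0 < odds (weights h)"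
  using weights_simplex[of h] unfolding odds_def by simp

lemma expected_odds_Suc:
  assumes h: "set h \<subseteq> {1..2}"
  shows "(\<Sum>c\<in>{1..2}. wsu_mix 2 g (weights h) c * odds (weights (c # h)))
    \<le> (if Suc (length h) \<le> T div 100 then 1 + 2 * e else 1 - e / 2) * odds (weights h)"
proof -
  have one_two: "{1, 2} = {1..2::nat}" and two_one: "{2, 1} = {1..2::nat}"
    by auto
  show ?thesis
  proof (cases "Suc (length h) \<le> T div 100")
    case True
    then show ?thesis
      using expected_odds_growth[OF h one_two] unfolding odds_def by (auto simp: two_phase_loss_def)
  next
    case False
    then show ?thesis
      using expected_odds_decay[OF h two_one] unfolding odds_def by (auto simp: two_phase_loss_def)
  qed
qed

lemma expected_odds:
  "(\<Sum>h\<in>histories 2 t. hprob h * odds (weights h))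
    \<le> (1 + 2 * e) ^ min t (T div 100) * (1 - e / 2) ^ (t - T div 100)"
proof (induction t)
  case 0
  then show ?case by (simp add: histories_0 odds_def)
next
  case (Suc t)
  define c where "c = (if Suc t \<le> T div 100 then 1 + 2 * e else 1 - e / 2)"
  have "0 \<le> c"
    using e_pos exploration_dominates g_less_1 unfolding c_def by auto
  have "(\<Sum>h\<in>histories 2 (Suc t). hprob h * odds (weights h))
      = (\<Sum>h\<in>histories 2 t. hprob h * (\<Sum>c\<in>{1..2}. wsu_mix 2 g (weights h) c * odds (weights (c # h))))"
    by (rule sum_histories_Suc_hist_prob)
  also have "\<dots> \<le> (\<Sum>h\<in>histories 2 t. hprob h * (c * odds (weights h)))"
  proof (intro sum_mono mult_left_mono)
    fix h assume h: "h \<in> histories 2 t"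
    then have "length h = t"
      unfolding histories_def by simp
    then show "(\<Sum>c\<in>{1..2}. wsu_mix 2 g (weights h) c * odds (weights (c # h))) \<le> c * odds (weights h)"
      using expected_odds_Suc[OF histories_subset[OF h]] unfolding c_def by simp
    show "0 \<le> hprob h"
      using hprob_nonneg[OF histories_subset[OF h]] .
  qed
  also have "\<dots> = c * (\<Sum>h\<in>histories 2 t. hprob h * odds (weights h))"
    by (simp add: sum_distrib_left mult_ac)
  also have "\<dots> \<le> c * ((1 + 2 * e) ^ min t (T div 100) * (1 - e / 2) ^ (t - T div 100))"
    using Suc \<open>0 \<le> c\<close> by (rule mult_left_mono)
  also have "\<dots> = (1 + 2 * e) ^ min (Suc t) (T div 100) * (1 - e / 2) ^ (Suc t - T div 100)"
  proof (cases "Suc t \<le> T div 100")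
    case True
    then have "min (Suc t) (T div 100) = Suc (min t (T div 100))" "Suc t - T div 100 = 0" "t - T div 100 = 0"
      by auto
    then show ?thesis using True unfolding c_def by simp
  next
    case False
    then have "min (Suc t) (T div 100) = min t (T div 100)" "Suc t - T div 100 = Suc (t - T div 100)"
      by auto
    then show ?thesis using False unfolding c_def by simp
  qed
  finally show ?case .
qed

lemma odds_ge_3: "set h \<subseteq> {1..2} \<Longrightarrow> weights h 1 < 1/4 \<Longrightarrow> 3 \<le> odds (weights h)"
  using weights_simplex[of h] unfolding odds_def sum_two_arms by (simp add: field_simps)

lemma two_phase_prob_arm1_large:
  assumes "100 dvd T"
  shows "1 - exp (- 8 * e * T / 100) / 3
    \<le> wsu_prob 2 e g (two_phase_loss T) (T div 100 + 2 * T div 10) (\<lambda>p. p 1 \<ge> 1/4)"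
proof -
  obtain m where T: "T = 100 * m"
    using assms by blast
  define t where "t = T div 100 + 2 * T div 10"
  have t: "t = m + 20 * m" "min t (T div 100) = m" "t - T div 100 = 20 * m"
    unfolding t_def T by auto
  have "(\<Sum>h\<in>histories 2 t. hprob h * odds (weights h)) \<le> (1 + 2 * e) ^ m * (1 - e / 2) ^ (20 * m)"
    using expected_odds[of t] unfolding t(2,3) .
  also have "\<dots> \<le> exp (2 * e) ^ m * exp (- e / 2) ^ (20 * m)"
    using e_pos exploration_dominates g_less_1 exp_ge_add_one_self[of "2 * e"] exp_ge_add_one_self[of "- e / 2"]
    by (intro mult_mono power_mono) auto
  also have "\<dots> = exp (- 8 * e * T / 100)"
    unfolding T exp_of_nat_mult[symmetric] exp_add[symmetric] by (simp add: algebra_simps)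
  finally have "(\<Sum>h\<in>histories 2 t. hprob h * odds (weights h)) \<le> exp (- 8 * e * T / 100)" .
  moreover have "1 - (\<Sum>h\<in>histories 2 t. hprob h * odds (weights h)) / 3
      \<le> wsu_prob 2 e g (two_phase_loss T) t (\<lambda>p. p 1 \<ge> 1/4)"
    using odds_pos odds_ge_3 histories_subset
    by (intro wsu_prob_ge_markov) (auto simp: less_imp_le)
  ultimately show ?thesis
    unfolding t_def by linarith
qed

end

lemma eventually_exp_tail_le_inverse_square:
  "eventually (\<lambda>T::nat. \<forall>e. real T powr (-2/3) \<le> e \<longrightarrow> exp (- 8 * e * T / 100) / 3 \<le> 2 / real T ^ 2)
     sequentially"
proof -
  have "eventually (\<lambda>T::nat. real T ^ 2 \<le> 6 * exp (8 * real T powr (1/3) / 100)) sequentially"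
    by real_asymp
  with eventually_gt_at_top[of 0] show ?thesis
  proof eventually_elim
    case (elim T)
    show ?case
    proof (intro allI impI)
      fix e assume e: "real T powr (-2/3) \<le> e"
      have "real T powr (1/3) = real T powr (-2/3) * real T"
        using elim powr_mult_base[of "real T" "-2/3"] by (simp add: mult.commute)
      also have "\<dots> \<le> e * real T"
        using e by (simp add: mult_right_mono)
      finally have "exp (8 * real T powr (1/3) / 100) \<le> exp (8 * e * real T / 100)"
        by simp
      then have "real T ^ 2 \<le> 6 * exp (8 * e * real T / 100)"
        using elim by linarith
      then show "exp (- 8 * e * T / 100) / 3 \<le> 2 / real T ^ 2"
        using elim by (simp add: exp_minus field_simps)
    qed
  qed
qed

theorem mainTheorem17:
  fixes eta gamma :: "nat \<Rightarrow> real"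
  assumes "\<And>T. 0 < T \<Longrightarrow> 100 dvd T \<Longrightarrow>
             valid_pair 2 (eta T) (gamma T) \<and> nontrivial_regime T (eta T) (gamma T)"
  shows "\<exists>T0. \<forall>T\<ge>T0. 100 dvd T \<longrightarrow>
           wsu_prob 2 (eta T) (gamma T) (two_phase_loss T) (T div 100 + 2 * T div 10)
             (\<lambda>p. p 1 \<ge> 1/4)
           \<ge> 1 - 2 / (real T)^2"
proof -
  obtain N where N: "\<And>T e. N \<le> T \<Longrightarrow> real T powr (-2/3) \<le> e \<Longrightarrow>
      exp (- 8 * e * T / 100) / 3 \<le> 2 / real T ^ 2"
    using eventually_exp_tail_le_inverse_square unfolding eventually_sequentially by blast
  show ?thesis
  proof (intro exI allI impI)
    fix T assume T: "max 1 N \<le> T" "100 dvd T"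
    then have "valid_pair 2 (eta T) (gamma T)" and "real T powr (-2/3) \<le> eta T"
      using assms unfolding nontrivial_regime_def by auto
    then interpret two_phase_wsu "eta T" "gamma T" T
      by unfold_locales (auto simp: two_phase_loss_def)
    show "wsu_prob 2 (eta T) (gamma T) (two_phase_loss T) (T div 100 + 2 * T div 10) (\<lambda>p. p 1 \<ge> 1/4)
        \<ge> 1 - 2 / (real T)^2"
      using two_phase_prob_arm1_large[OF T(2)] N[of T "eta T"] T \<open>real T powr (-2/3) \<le> eta T\<close>
      by linarith
  qed
qed

end
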